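(* Let $D_0, D_1, D_2$ be three mutually tangent disks such that $D_1$ and $D_2$ are inner disks of positive curvatures $B_1$ and $B_2$, and $D_0$ is an outer disk of negative curvature $B_0$ containing them. Let $\mathbf a = \mathrm{spin}(D_0,D_1)$ and $\mathbf b = \mathrm{spin}(D_0,D_2)$ be tangency spinors, viewed as vectors in $\mathbb R^2$, and let $M=[\mathbf a\ \mathbf b]$ be the $2\times 2$ matrix with columns $\mathbf a,\mathbf b$. Put $B = |\mathbf a\times\mathbf b| = |\det M|$. Then $$B_0=-B,\qquad B_1 = B+\|\mathbf a\|^2,\qquad B_2 = B+\|\mathbf b\|^2 .$$ Moreover, setting $$B_{3} = B+\|\mathbf a+\mathbf b\|^2 = B+\|\mathbf a\|^2+\|\mathbf b\|^2+2\,\mathbf a\cdot\mathbf b,\qquad B_{4} = B+\|\mathbf a-\mathbf b\|^2 = B+\|\mathbf a\|^2+\|\mathbf b\|^2-2\,\mathbf a\cdot\mathbf b,$$ both quadruples $(B_0,B_1,B_2,B_3)$ and $(B_0,B_1,B_2,B_4)$ satisfy the Descartes formula $2(A^2+B^2+C^2+D^2)=(A+B+C+D)^2$.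
   Context: A disk is the interior (inner disk) or the exterior (outer disk) of a circle; an inner disk of radius $r>0$ has curvature $1/r>0$, an outer disk bounded by a circle of radius $r$ is assigned signed radius $-r$ and curvature $-1/r<0$. Tangent disks are assumed not to overlap. Identify the plane with $\mathbb C\cong\mathbb R^2$. For an ordered pair $(A,B)$ of tangent disks with centers $c_A,c_B\in\mathbb C$ and signed radii $r_A,r_B$, the tangency spinor is $\mathrm{spin}(A,B)=\pm\sqrt{(c_B-c_A)/(r_Ar_B)}\in\mathbb C$, defined up to sign and regarded as the vector $(\mathrm{Re},\mathrm{Im})\in\mathbb R^2$. For $\mathbf a=(x,y)^T,\mathbf b=(x',y')^T\in\mathbb R^2$: $\mathbf a\cdot\mathbf b=xx'+yy'$, $\mathbf a\times\mathbf b=xy'-x'y=\det[\mathbf a\ \mathbf b]$, $\|\mathbf a\|^2=\mathbf a\cdot\mathbf a$. *)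

theory Defs
  imports "HOL-Analysis.Analysis"
begin

text \<open>A disk is encoded by its center (a complex number) and its signed radius:
  r > 0 for the inner disk of radius r, r < 0 for the outer disk bounded by the
  circle of radius -r.\<close>

type_synonym disk = "complex \<times> real"

definition center :: "disk \<Rightarrow> complex" where "center D = fst D"
definition sradius :: "disk \<Rightarrow> real" where "sradius D = snd D"
definition curvature :: "disk \<Rightarrow> real" where "curvature D = 1 / sradius D"

definition is_disk :: "disk \<Rightarrow> bool" where "is_disk D \<longleftrightarrow> sradius D \<noteq> 0"

text \<open>Tangent, non-overlapping disks: two inner disks are externally tangent;
  an inner disk is internally tangent to (contained in the circle of) an outer disk;
  two outer disks always overlap, hence are never tangent in this sense.\<close>

definition tangent_disks :: "disk \<Rightarrow> disk \<Rightarrow> bool" where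
  "tangent_disks A B \<longleftrightarrow>
     (let rA = sradius A; rB = sradius B; d = cmod (center A - center B) in
       (rA > 0 \<and> rB > 0 \<and> d = rA + rB) \<or>
       (rA < 0 \<and> rB > 0 \<and> rA + rB < 0 \<and> d = - rA - rB) \<or>
       (rA > 0 \<and> rB < 0 \<and> rA + rB < 0 \<and> d = - rA - rB))"

definition is_spin :: "disk \<Rightarrow> disk \<Rightarrow> complex \<Rightarrow> bool" where
  "is_spin A B s \<longleftrightarrow> s\<^sup>2 = (center B - center A) / complex_of_real (sradius A * sradius B)"

definition vdot :: "complex \<Rightarrow> complex \<Rightarrow> real" where
  "vdot a b = Re a * Re b + Im a * Im b"

definition vcross :: "complex \<Rightarrow> complex \<Rightarrow> real" where
  "vcross a b = Re a * Im b - Re b * Im a"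

definition vnorm2 :: "complex \<Rightarrow> real" where
  "vnorm2 a = vdot a a"

definition descartes :: "real \<Rightarrow> real \<Rightarrow> real \<Rightarrow> real \<Rightarrow> bool" where
  "descartes A B C D \<longleftrightarrow> 2 * (A\<^sup>2 + B\<^sup>2 + C\<^sup>2 + D\<^sup>2) = (A + B + C + D)\<^sup>2"

end

theory Submission
  imports Defs
begin

text \<open>Tangency forces \<open>|c\<^sub>A - c\<^sub>B| = |r\<^sub>A + r\<^sub>B|\<close>, and \<open>r\<^sub>A + r\<^sub>B\<close> always has the sign of
  \<open>r\<^sub>A r\<^sub>B\<close>; hence a spinor of a tangent pair satisfies \<open>\<parallel>s\<parallel>\<^sup>2 = |s\<^sup>2| = B\<^sub>A + B\<^sub>B\<close>.
  For spinors \<open>a, b\<close> of \<open>(D\<^sub>0,D\<^sub>1)\<close> and \<open>(D\<^sub>0,D\<^sub>2)\<close>, the law of cosines in the triangle of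
  centres computes \<open>Re (cnj (a\<^sup>2) b\<^sup>2) = (a\<cdot>b)\<^sup>2 - (a\<times>b)\<^sup>2\<close> in terms of curvatures;
  comparing with \<open>(a\<cdot>b)\<^sup>2 + (a\<times>b)\<^sup>2 = \<parallel>a\<parallel>\<^sup>2\<parallel>b\<parallel>\<^sup>2\<close> gives \<open>(a\<times>b)\<^sup>2 = B\<^sub>0\<^sup>2\<close>.
  The Descartes relations then reduce to the Lagrange identity.\<close>

lemma vnorm2_eq_cmod_power2: "vnorm2 a = cmod (a\<^sup>2)"
  unfolding vnorm2_def vdot_def norm_power by (simp add: cmod_def power2_eq_square)

lemma vnorm2_add: "vnorm2 (a + b) = vnorm2 a + vnorm2 b + 2 * vdot a b"
  unfolding vnorm2_def vdot_def by (simp add: algebra_simps)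

lemma vnorm2_diff: "vnorm2 (a - b) = vnorm2 a + vnorm2 b - 2 * vdot a b"
  unfolding vnorm2_def vdot_def by (simp add: algebra_simps)

lemma vdot_power2_add_vcross_power2: "(vdot a b)\<^sup>2 + (vcross a b)\<^sup>2 = vnorm2 a * vnorm2 b"
  unfolding vcross_def vnorm2_def vdot_def by (simp add: power2_eq_square algebra_simps)

lemma vdot_power2_diff_vcross_power2: "(vdot a b)\<^sup>2 - (vcross a b)\<^sup>2 = Re (cnj (a\<^sup>2) * b\<^sup>2)"
  unfolding vcross_def vdot_def by (simp add: power2_eq_square algebra_simps)

lemma cmod_diff_power2: "(cmod (u - v))\<^sup>2 = (cmod u)\<^sup>2 + (cmod v)\<^sup>2 - 2 * Re (cnj u * v)"
  unfolding cmod_power2 by (simp add: power2_eq_square algebra_simps)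

lemma descartes_of_lagrange:
  fixes B P Q d :: real
  assumes "B\<^sup>2 = P * Q - d\<^sup>2"
  shows "descartes (- B) (B + P) (B + Q) (B + P + Q + 2 * d)"
  unfolding descartes_def using assms by (simp add: power2_eq_square algebra_simps)

lemma tangent_disks_sym: "tangent_disks A B \<Longrightarrow> tangent_disks B A"
  unfolding tangent_disks_def Let_def by (auto simp: norm_minus_commute)

lemma tangent_disks_sradius_nonzero: "tangent_disks A B \<Longrightarrow> sradius A \<noteq> 0"
  unfolding tangent_disks_def Let_def by auto

lemma tangent_disks_dist: "tangent_disks A B \<Longrightarrow> cmod (center B - center A) = \<bar>sradius A + sradius B\<bar>"
  unfolding tangent_disks_def Let_def by (auto simp: norm_minus_commute)

lemma tangent_disks_curvature_sum_pos: "tangent_disks A B \<Longrightarrow> curvature A + curvature B > 0"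
  unfolding tangent_disks_def Let_def curvature_def
  by (auto simp: field_simps mult_neg_pos mult_pos_neg)

lemma vnorm2_spin:
  assumes "tangent_disks A B" and "is_spin A B s"
  shows "vnorm2 s = curvature A + curvature B"
proof -
  have rA: "sradius A \<noteq> 0" and rB: "sradius B \<noteq> 0"
    using assms(1) tangent_disks_sradius_nonzero tangent_disks_sym by blast+
  have "vnorm2 s = \<bar>sradius A + sradius B\<bar> / \<bar>sradius A * sradius B\<bar>"
    using assms unfolding vnorm2_eq_cmod_power2 is_spin_def
    by (simp add: norm_divide norm_mult abs_mult tangent_disks_dist)
  also have "\<dots> = \<bar>curvature A + curvature B\<bar>"
    using rA rB by (simp add: curvature_def field_simps abs_mult)
  finally show ?thesis
    using tangent_disks_curvature_sum_pos[OF assms(1)] by simp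
qed

lemma Re_cnj_spin_power2_mult:
  assumes "tangent_disks D0 D1" and "tangent_disks D0 D2" and "tangent_disks D1 D2"
    and "is_spin D0 D1 a" and "is_spin D0 D2 b"
  shows "Re (cnj (a\<^sup>2) * b\<^sup>2) = curvature D0 * curvature D1 + curvature D0 * curvature D2
           + curvature D1 * curvature D2 - (curvature D0)\<^sup>2"
proof -
  define r0 r1 r2 where "r0 = sradius D0" and "r1 = sradius D1" and "r2 = sradius D2"
  define u v where "u = center D1 - center D0" and "v = center D2 - center D0"
  have nonzero: "r0 \<noteq> 0" "r1 \<noteq> 0" "r2 \<noteq> 0"
    using assms(1-3) tangent_disks_sradius_nonzero tangent_disks_sym
    unfolding r0_def r1_def r2_def by blast+
  have "(cmod (u - v))\<^sup>2 = (r1 + r2)\<^sup>2"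
    using tangent_disks_dist[OF assms(3)] by (simp add: u_def v_def r1_def r2_def norm_minus_commute)
  moreover have "(cmod u)\<^sup>2 = (r0 + r1)\<^sup>2" and "(cmod v)\<^sup>2 = (r0 + r2)\<^sup>2"
    using tangent_disks_dist[OF assms(1)] tangent_disks_dist[OF assms(2)]
    by (simp_all add: u_def v_def r0_def r1_def r2_def)
  ultimately have Re_uv: "Re (cnj u * v) = ((r0 + r1)\<^sup>2 + (r0 + r2)\<^sup>2 - (r1 + r2)\<^sup>2) / 2"
    using cmod_diff_power2[of u v] by simp
  have "Re (cnj (a\<^sup>2) * b\<^sup>2) = Re (cnj u * v) / (r0 * r1 * (r0 * r2))"
    using assms(4,5) unfolding is_spin_def
    by (simp add: u_def v_def r0_def r1_def r2_def complex_cnj_divide Re_divide_of_real mult_ac)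
  also have "\<dots> = 1/r0 * (1/r1) + 1/r0 * (1/r2) + 1/r1 * (1/r2) - (1/r0)\<^sup>2"
    unfolding Re_uv using nonzero by (simp add: field_simps power2_eq_square)
  finally show ?thesis
    by (simp add: curvature_def r0_def r1_def r2_def)
qed

lemma vcross_spin_power2:
  assumes "tangent_disks D0 D1" and "tangent_disks D0 D2" and "tangent_disks D1 D2"
    and "is_spin D0 D1 a" and "is_spin D0 D2 b"
  shows "(vcross a b)\<^sup>2 = (curvature D0)\<^sup>2"
proof -
  have "2 * (vcross a b)\<^sup>2 = vnorm2 a * vnorm2 b - Re (cnj (a\<^sup>2) * b\<^sup>2)"
    using vdot_power2_add_vcross_power2[of a b] vdot_power2_diff_vcross_power2[of a b] by simp
  also have "\<dots> = 2 * (curvature D0)\<^sup>2"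
    unfolding vnorm2_spin[OF assms(1,4)] vnorm2_spin[OF assms(2,5)] Re_cnj_spin_power2_mult[OF assms]
    by (simp add: power2_eq_square algebra_simps)
  finally show ?thesis by simp
qed

theorem proposition3p1:
  fixes D0 D1 D2 :: disk and a b :: complex
  assumes "curvature D0 < 0" and "curvature D1 > 0" and "curvature D2 > 0"
    and "tangent_disks D0 D1" and "tangent_disks D0 D2" and "tangent_disks D1 D2"
    and "is_spin D0 D1 a" and "is_spin D0 D2 b"
  shows "curvature D0 = - \<bar>vcross a b\<bar>
       \<and> curvature D1 = \<bar>vcross a b\<bar> + vnorm2 a
       \<and> curvature D2 = \<bar>vcross a b\<bar> + vnorm2 b
       \<and> descartes (curvature D0) (curvature D1) (curvature D2)
                   (\<bar>vcross a b\<bar> + vnorm2 (a + b))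
       \<and> descartes (curvature D0) (curvature D1) (curvature D2)
                   (\<bar>vcross a b\<bar> + vnorm2 (a - b))
       \<and> \<bar>vcross a b\<bar> + vnorm2 (a + b) = \<bar>vcross a b\<bar> + vnorm2 a + vnorm2 b + 2 * vdot a b
       \<and> \<bar>vcross a b\<bar> + vnorm2 (a - b) = \<bar>vcross a b\<bar> + vnorm2 a + vnorm2 b - 2 * vdot a b"
proof -
  define B where "B = \<bar>vcross a b\<bar>"
  have B0: "curvature D0 = - B"
    using vcross_spin_power2[OF assms(4-8)] assms(1) unfolding B_def
    by (metis abs_of_neg minus_minus power2_abs real_sqrt_abs)
  have B1: "curvature D1 = B + vnorm2 a" and B2: "curvature D2 = B + vnorm2 b"
    using vnorm2_spin assms(4,5,7,8) B0 by auto
  have "B\<^sup>2 = vnorm2 a * vnorm2 b - (vdot a b)\<^sup>2"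
    using vdot_power2_add_vcross_power2[of a b] unfolding B_def by simp
  then have "descartes (- B) (B + vnorm2 a) (B + vnorm2 b) (B + vnorm2 (a + b))"
    and "descartes (- B) (B + vnorm2 a) (B + vnorm2 b) (B + vnorm2 (a - b))"
    using descartes_of_lagrange[of B "vnorm2 a" "vnorm2 b" "vdot a b"]
      descartes_of_lagrange[of B "vnorm2 a" "vnorm2 b" "- vdot a b"]
    by (simp_all add: vnorm2_add vnorm2_diff algebra_simps)
  then show ?thesis
    unfolding B0 B1 B2 by (simp add: B_def vnorm2_add vnorm2_diff)
qed

end
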